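(* A set $\mathcal{O}$ of upwards-closed modalities is decomposable if and only if for any $r\in TT\mathbf{1}$ and $o\in\mathcal{O}$ such that $\mu r\in o(\{*\})$, there is a collection of pairs $\{(o_i,\Phi_i)\}_{i\in I}$ with each $o_i\in\mathcal{O}$ and $\Phi_i\in\mathcal{T}$ such that: (1) for all $i\in I$, $r\in o_i([\![\Phi_i]\!])$; and (2) for all $r'\in TT\mathbf{1}$, if $r'\in o_i([\![\Phi_i]\!])$ for all $i\in I$, then $\mu r'\in o(\{*\})$.
   Context: $\Sigma$ is a signature of effect operations with arities $\alpha^n\to\alpha$, $\mathbf{N}\times\alpha^n\to\alpha$, $\alpha^{\mathbf{N}}\to\alpha$ or $\mathbf{N}\times\alpha^{\mathbf{N}}\to\alpha$. $TX$ is the set of possibly infinite labelled trees with leaves $\bot$ or elements of $X$ and internal nodes labelled by operations (or $\sigma_m$, $m\in\mathbb{N}$) with children according to arity; $t\le t'$ iff $t$ is obtained from $t'$ by replacing subtrees with $\bot$. $\mu:TTX\to TX$ replaces each leaf of a tree of trees by that tree. $\mathbf{1}=\{*\}$. A set $\mathcal{O}$ of modalities is given with $[\![o]\!]\subseteq T\mathbf{1}$; upwards closed means $[\![o]\!]$ is upward closed under $\le$. $t[\in P]\in T\mathbf{1}$ replaces leaves in $P$ by $*$ and other $X$-leaves by $\bot$; $o(A)=\{t\in TX\mid t[\in A]\in[\![o]\!]\}$. $\mathcal{T}$ is the least class of formulas containing $o(\top),o(\bot)$ ($o\in\mathcal{O}$) closed under arbitrary $\bigvee,\bigwedge$, with $[\![o(\top)]\!]=o(\{*\})$,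 $[\![o(\bot)]\!]=o(\emptyset)$, unions/intersections. On $T\mathbf{1}$: $t\trianglelefteq t'$ iff $\forall\Phi\in\mathcal{T}$, $t\in[\![\Phi]\!]\Rightarrow t'\in[\![\Phi]\!]$. On $TT\mathbf{1}$: $r\preccurlyeq r'$ iff $\forall o\,\forall\Phi\in\mathcal{T}$, $r\in o([\![\Phi]\!])\Rightarrow r'\in o([\![\Phi]\!])$. $\mathcal{O}$ is decomposable if $r\preccurlyeq r'$ implies $\mu r\trianglelefteq\mu r'$ for all $r,r'\in TT\mathbf{1}$. *)

theory Defs
  imports Main
begin

text \<open>Signature: node labels of type 'l with arity given by ar :: 'l => nat option.
  Some n: finitely many (n) children; None: countably many children (indexed by nat).
  Parametrised operations N x alpha^n -> alpha are represented by one label per parameter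
  value (sigma_m), as in the paper.\<close>

codatatype ('l, 'x) tree = Bot | Leaf 'x | Node 'l "nat \<Rightarrow> ('l, 'x) tree"

coinductive wfT :: "('l \<Rightarrow> nat option) \<Rightarrow> 'x set \<Rightarrow> ('l, 'x) tree \<Rightarrow> bool"
  for ar X where
  wf_Bot: "wfT ar X Bot"
| wf_Leaf: "x \<in> X \<Longrightarrow> wfT ar X (Leaf x)"
| wf_Node: "(\<forall>n i. ar l = Some n \<longrightarrow> n \<le> i \<longrightarrow> f i = Bot) \<Longrightarrow> (\<forall>i. wfT ar X (f i))
            \<Longrightarrow> wfT ar X (Node l f)"

definition TT :: "('l \<Rightarrow> nat option) \<Rightarrow> 'x set \<Rightarrow> ('l, 'x) tree set" where
  "TT ar X = {t. wfT ar X t}"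

abbreviation T1 :: "('l \<Rightarrow> nat option) \<Rightarrow> ('l, unit) tree set" where
  "T1 ar \<equiv> TT ar UNIV"

coinductive tle :: "('l, 'x) tree \<Rightarrow> ('l, 'x) tree \<Rightarrow> bool" where
  tle_Bot: "tle Bot t"
| tle_Leaf: "tle (Leaf x) (Leaf x)"
| tle_Node: "(\<forall>i. tle (f i) (g i)) \<Longrightarrow> tle (Node l f) (Node l g)"

primcorec mu :: "('l, ('l, 'x) tree) tree \<Rightarrow> ('l, 'x) tree" where
  "mu r = (case r of
      Bot \<Rightarrow> Bot
    | Leaf t \<Rightarrow> (case t of Bot \<Rightarrow> Bot | Leaf x \<Rightarrow> Leaf x | Node l g \<Rightarrow> Node l g)
    | Node l f \<Rightarrow> Node l (\<lambda>i. mu (f i)))"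

primcorec restr :: "'x set \<Rightarrow> ('l, 'x) tree \<Rightarrow> ('l, unit) tree" where
  "restr P t = (case t of
      Bot \<Rightarrow> Bot
    | Leaf x \<Rightarrow> (if x \<in> P then Leaf () else Bot)
    | Node l f \<Rightarrow> Node l (\<lambda>i. restr P (f i)))"

text \<open>o(A) = {t in TX | t[\<in>A] \<in> [[o]]}, with sem m = [[o]].\<close>
definition modal :: "('l \<Rightarrow> nat option) \<Rightarrow> 'x set \<Rightarrow> ('m \<Rightarrow> ('l, unit) tree set) \<Rightarrow> 'm
                      \<Rightarrow> 'x set \<Rightarrow> ('l, 'x) tree set" where
  "modal ar X sem m A = {t \<in> TT ar X. restr A t \<in> sem m}"

text \<open>Denotations of the formulas in the class \<T> (least class containing o(top), o(bot)
  and closed under arbitrary disjunctions and conjunctions); conjunctions are interpreted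
  inside T1 (so the empty conjunction is T1).\<close>
inductive_set Tsem :: "('l \<Rightarrow> nat option) \<Rightarrow> 'm set \<Rightarrow> ('m \<Rightarrow> ('l, unit) tree set)
                       \<Rightarrow> ('l, unit) tree set set"
  for ar Os sem where
  T_top: "m \<in> Os \<Longrightarrow> modal ar UNIV sem m {()} \<in> Tsem ar Os sem"
| T_bot: "m \<in> Os \<Longrightarrow> modal ar UNIV sem m {} \<in> Tsem ar Os sem"
| T_Sup: "\<forall>P\<in>S. P \<in> Tsem ar Os sem \<Longrightarrow> \<Union>S \<in> Tsem ar Os sem"
| T_Inf: "\<forall>P\<in>S. P \<in> Tsem ar Os sem \<Longrightarrow> T1 ar \<inter> \<Inter>S \<in> Tsem ar Os sem"

definition upwards_closed :: "('l \<Rightarrow> nat option) \<Rightarrow> 'm set \<Rightarrow> ('m \<Rightarrow> ('l, unit) tree set) \<Rightarrow> bool" where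
  "upwards_closed ar Os sem \<longleftrightarrow>
     (\<forall>m\<in>Os. \<forall>t t'. t \<in> sem m \<longrightarrow> t' \<in> T1 ar \<longrightarrow> tle t t' \<longrightarrow> t' \<in> sem m)"

definition tri_le :: "('l \<Rightarrow> nat option) \<Rightarrow> 'm set \<Rightarrow> ('m \<Rightarrow> ('l, unit) tree set)
                      \<Rightarrow> ('l, unit) tree \<Rightarrow> ('l, unit) tree \<Rightarrow> bool" where
  "tri_le ar Os sem t t' \<longleftrightarrow> (\<forall>P \<in> Tsem ar Os sem. t \<in> P \<longrightarrow> t' \<in> P)"

definition curly_le :: "('l \<Rightarrow> nat option) \<Rightarrow> 'm set \<Rightarrow> ('m \<Rightarrow> ('l, unit) tree set)
                      \<Rightarrow> ('l, ('l, unit) tree) tree \<Rightarrow> ('l, ('l, unit) tree) tree \<Rightarrow> bool" where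
  "curly_le ar Os sem r r' \<longleftrightarrow> (\<forall>m\<in>Os. \<forall>P \<in> Tsem ar Os sem.
      r \<in> modal ar (T1 ar) sem m P \<longrightarrow> r' \<in> modal ar (T1 ar) sem m P)"

definition decomposable :: "('l \<Rightarrow> nat option) \<Rightarrow> 'm set \<Rightarrow> ('m \<Rightarrow> ('l, unit) tree set) \<Rightarrow> bool" where
  "decomposable ar Os sem \<longleftrightarrow>
     (\<forall>r \<in> TT ar (T1 ar). \<forall>r' \<in> TT ar (T1 ar).
        curly_le ar Os sem r r' \<longrightarrow> tri_le ar Os sem (mu r) (mu r'))"

end

theory Submission imports Defs begin

text \<open>Since every formula of \<open>\<T>\<close> is built from \<open>o(\<top>)\<close> and \<open>o(\<bottom>)\<close> by unions and
  intersections, \<open>\<mu> r \<unlhd> \<mu> r'\<close> holds as soon as membership in every \<open>o(\<top>)\<close> and every \<open>o(\<bottom>)\<close>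
  is transferred from \<open>\<mu> r\<close> to \<open>\<mu> r'\<close>. The \<open>o(\<bottom>)\<close> case reduces to the
  \<open>o(\<top>)\<close> case by erasing all leaves of the inner trees: \<open>\<mu> r \<in> o(\<emptyset>)\<close> iff the erased
  \<open>\<mu> r\<close> lies in \<open>o({*})\<close>, erasure commutes with \<open>\<mu>\<close>, and \<open>\<preccurlyeq>\<close> is preserved by erasure because
  the preimage of a formula under erasure is again (the denotation of) a formula.
  Transfer of \<open>o(\<top>)\<close> along \<open>\<preccurlyeq>\<close> is in turn equivalent to the existence of the family
  \<open>{(o\<^sub>i, \<Phi>\<^sub>i)}\<close>: take all pairs satisfied by \<open>r\<close>.\<close>

lemma restr_simps [simp]:
  "restr P Bot = Bot"
  "restr P (Leaf x) = (if x \<in> P then Leaf () else Bot)"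
  "restr P (Node l f) = Node l (\<lambda>i. restr P (f i))"
  by (subst restr.code; simp)+

lemma mu_simps [simp]:
  "mu Bot = Bot"
  "mu (Leaf t) = t"
  "mu (Node l f) = Node l (\<lambda>i. mu (f i))"
  by (subst mu.code; simp split: tree.split)+

lemma wfT_restr: "wfT ar X t \<Longrightarrow> wfT ar UNIV (restr A t)"
proof (coinduction arbitrary: t rule: wfT.coinduct)
  case (wfT t)
  then show ?case
  proof (cases rule: wfT.cases)
    case (wf_Node l f)
    then show ?thesis by (intro disjI2) (auto intro!: exI[of _ "\<lambda>i. restr A (f i)"])
  qed auto
qed

lemma wfT_map_tree:
  assumes "\<forall>x\<in>X. g x \<in> Y"
  shows "wfT ar X t \<Longrightarrow> wfT ar Y (map_tree id g t)"
proof (coinduction arbitrary: t rule: wfT.coinduct)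
  case (wfT t)
  then show ?case
  proof (cases rule: wfT.cases)
    case (wf_Node l f)
    then show ?thesis by (intro disjI2) (auto intro!: exI[of _ "\<lambda>i. map_tree id g (f i)"])
  qed (use assms in auto)
qed

lemma wfT_mu: "wfT ar (TT ar X) r \<Longrightarrow> wfT ar X (mu r)"
proof (coinduction arbitrary: r rule: wfT.coinduct)
  case (wfT r)
  then show ?case
  proof (cases rule: wfT.cases)
    case (wf_Leaf t)
    then have "wfT ar X t" by (simp add: TT_def)
    then show ?thesis using wf_Leaf by (cases rule: wfT.cases) auto
  qed auto
qed

lemma restr_Int_leaves: "wfT ar X t \<Longrightarrow> restr (A \<inter> X) t = restr A t"
  by (coinduction arbitrary: t rule: tree.coinduct_strong)
     (auto simp: rel_fun_def elim!: wfT.cases)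

lemma restr_map_tree: "restr P (map_tree id g t) = restr (g -` P) t"
  by (coinduction arbitrary: t rule: tree.coinduct_strong)
     (auto simp: rel_fun_def split: tree.split)

abbreviation erase :: "('l, 'x) tree \<Rightarrow> ('l, unit) tree" where
  "erase \<equiv> restr {}"

lemma restr_erase [simp]: "restr A (erase t) = erase t"
  by (coinduction arbitrary: t rule: tree.coinduct_strong)
     (auto simp: rel_fun_def split: tree.split)

lemma mu_map_erase: "mu (map_tree id erase r) = erase (mu r)"
  by (coinduction arbitrary: r rule: tree.coinduct_strong)
     (auto simp: rel_fun_def split: tree.split)

lemma erase_in_T1: "t \<in> TT ar X \<Longrightarrow> erase t \<in> T1 ar"
  by (simp add: TT_def wfT_restr)

lemma mu_in_T1: "r \<in> TT ar (T1 ar) \<Longrightarrow> mu r \<in> T1 ar"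
  by (simp add: TT_def wfT_mu)

lemma map_erase_in_TT: "r \<in> TT ar (T1 ar) \<Longrightarrow> map_tree id erase r \<in> TT ar (T1 ar)"
  using wfT_map_tree[of "T1 ar" erase "T1 ar" ar r] erase_in_T1[of _ ar UNIV]
  unfolding TT_def by blast

lemma modal_empty_iff_erase:
  "t \<in> modal ar UNIV sem m {} \<longleftrightarrow> t \<in> T1 ar \<and> erase t \<in> modal ar UNIV sem m {()}"
  by (auto simp: modal_def erase_in_T1)

definition erase_preimage :: "('l \<Rightarrow> nat option) \<Rightarrow> ('l, unit) tree set \<Rightarrow> ('l, unit) tree set" where
  "erase_preimage ar P = T1 ar \<inter> erase -` P"

lemma erase_preimage_modal:
  "erase_preimage ar (modal ar UNIV sem m A) = modal ar UNIV sem m {}"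
  by (auto simp: erase_preimage_def modal_def erase_in_T1)

lemma Tsem_erase_preimage:
  "P \<in> Tsem ar Os sem \<Longrightarrow> erase_preimage ar P \<in> Tsem ar Os sem"
proof (induction rule: Tsem.induct)
  case (T_top m)
  then show ?case by (simp add: erase_preimage_modal Tsem.T_bot)
next
  case (T_bot m)
  then show ?case by (simp add: erase_preimage_modal Tsem.T_bot)
next
  case (T_Sup S)
  have "erase_preimage ar (\<Union>S) = \<Union>(erase_preimage ar ` S)"
    by (auto simp: erase_preimage_def)
  then show ?case using T_Sup by (auto intro!: Tsem.T_Sup)
next
  case (T_Inf S)
  have "erase_preimage ar (T1 ar \<inter> \<Inter>S) = T1 ar \<inter> \<Inter>(erase_preimage ar ` S)"
    by (auto simp: erase_preimage_def erase_in_T1)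
  then show ?case using T_Inf by (auto intro!: Tsem.T_Inf)
qed

lemma modal_map_erase_iff:
  assumes "r \<in> TT ar (T1 ar)"
  shows "map_tree id erase r \<in> modal ar (T1 ar) sem m P \<longleftrightarrow>
    r \<in> modal ar (T1 ar) sem m (erase_preimage ar P)"
proof -
  have "restr P (map_tree id erase r) = restr (erase_preimage ar P) r"
    using assms restr_Int_leaves[of ar "T1 ar" r "erase -` P"]
    by (simp add: restr_map_tree erase_preimage_def TT_def Int_commute)
  then show ?thesis using assms map_erase_in_TT[OF assms] by (auto simp: modal_def)
qed

lemma curly_le_map_erase:
  assumes "r \<in> TT ar (T1 ar)" "r' \<in> TT ar (T1 ar)" "curly_le ar Os sem r r'"
  shows "curly_le ar Os sem (map_tree id erase r) (map_tree id erase r')"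
  unfolding curly_le_def
proof (intro ballI impI)
  fix m P
  assume "m \<in> Os" "P \<in> Tsem ar Os sem" "map_tree id erase r \<in> modal ar (T1 ar) sem m P"
  with assms have "r' \<in> modal ar (T1 ar) sem m (erase_preimage ar P)"
    by (simp add: modal_map_erase_iff curly_le_def Tsem_erase_preimage)
  with assms(2) show "map_tree id erase r' \<in> modal ar (T1 ar) sem m P"
    by (simp add: modal_map_erase_iff)
qed

lemma decomposable_if_top_preserved:
  assumes top: "\<And>r r' m. r \<in> TT ar (T1 ar) \<Longrightarrow> r' \<in> TT ar (T1 ar) \<Longrightarrow>
      curly_le ar Os sem r r' \<Longrightarrow> m \<in> Os \<Longrightarrow>
      mu r \<in> modal ar UNIV sem m {()} \<Longrightarrow> mu r' \<in> modal ar UNIV sem m {()}"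
  shows "decomposable ar Os sem"
  unfolding decomposable_def tri_le_def
proof (intro ballI impI)
  fix r r' P
  assume r: "r \<in> TT ar (T1 ar)" and r': "r' \<in> TT ar (T1 ar)"
    and le: "curly_le ar Os sem r r'" and "P \<in> Tsem ar Os sem"
  from this(4) show "mu r \<in> P \<Longrightarrow> mu r' \<in> P"
  proof (induction P rule: Tsem.induct)
    case (T_top m)
    then show ?case using top r r' le by blast
  next
    case (T_bot m)
    have "mu (map_tree id erase r') \<in> modal ar UNIV sem m {()}"
      using top[OF map_erase_in_TT[OF r] map_erase_in_TT[OF r'] curly_le_map_erase[OF r r' le]]
        T_bot by (simp add: mu_map_erase modal_empty_iff_erase)
    then show ?case using mu_in_T1[OF r'] by (simp add: mu_map_erase modal_empty_iff_erase)
  qed (use mu_in_T1[OF r'] in auto)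
qed

lemma decomposable_iff_top_preserved:
  "decomposable ar Os sem \<longleftrightarrow>
    (\<forall>m\<in>Os. \<forall>r\<in>TT ar (T1 ar). \<forall>r'\<in>TT ar (T1 ar). curly_le ar Os sem r r' \<longrightarrow>
       mu r \<in> modal ar UNIV sem m {()} \<longrightarrow> mu r' \<in> modal ar UNIV sem m {()})"
  using decomposable_if_top_preserved[of ar Os sem] Tsem.T_top[of _ Os ar sem]
  by (auto simp: decomposable_def tri_le_def)

lemma preserved_iff_certified:
  "(\<forall>r\<in>R. \<forall>r'\<in>R. (\<forall>c\<in>Cs. sat r c \<longrightarrow> sat r' c) \<longrightarrow> good r \<longrightarrow> good r') \<longleftrightarrow>
   (\<forall>r\<in>R. good r \<longrightarrow>
      (\<exists>C\<subseteq>Cs. (\<forall>c\<in>C. sat r c) \<and> (\<forall>r'\<in>R. (\<forall>c\<in>C. sat r' c) \<longrightarrow> good r')))"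
  (is "?preserved \<longleftrightarrow> ?certified")
proof
  assume ?preserved
  show ?certified
  proof (intro ballI impI)
    fix r assume "r \<in> R" "good r"
    let ?C = "{c\<in>Cs. sat r c}"
    have "\<forall>r'\<in>R. (\<forall>c\<in>?C. sat r' c) \<longrightarrow> good r'"
      using \<open>?preserved\<close> \<open>r \<in> R\<close> \<open>good r\<close> by auto
    then show "\<exists>C\<subseteq>Cs. (\<forall>c\<in>C. sat r c) \<and> (\<forall>r'\<in>R. (\<forall>c\<in>C. sat r' c) \<longrightarrow> good r')"
      by (intro exI[of _ ?C]) auto
  qed
next
  assume ?certified
  show ?preserved
  proof (intro ballI impI)
    fix r r' assume r: "r \<in> R" and r': "r' \<in> R"
      and le: "\<forall>c\<in>Cs. sat r c \<longrightarrow> sat r' c" and "good r"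
    obtain C where "C \<subseteq> Cs" "\<forall>c\<in>C. sat r c"
      and good: "\<forall>r'\<in>R. (\<forall>c\<in>C. sat r' c) \<longrightarrow> good r'"
      using \<open>?certified\<close> r \<open>good r\<close> by auto
    then have "\<forall>c\<in>C. sat r' c" using le by blast
    then show "good r'" using good r' by blast
  qed
qed

lemma curly_le_iff_tests:
  "curly_le ar Os sem r r' \<longleftrightarrow>
    (\<forall>c\<in>Os \<times> Tsem ar Os sem. r \<in> modal ar (T1 ar) sem (fst c) (snd c) \<longrightarrow>
       r' \<in> modal ar (T1 ar) sem (fst c) (snd c))"
  by (auto simp: curly_le_def)

theorem lemma4p17:
  fixes ar :: "'l \<Rightarrow> nat option"
    and Os :: "'m set"
    and sem :: "'m \<Rightarrow> ('l, unit) tree set"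
  assumes sem_T1: "\<forall>m\<in>Os. sem m \<subseteq> T1 ar"
    and up: "upwards_closed ar Os sem"
  shows "decomposable ar Os sem \<longleftrightarrow>
    (\<forall>r \<in> TT ar (T1 ar). \<forall>m \<in> Os. mu r \<in> modal ar UNIV sem m {()} \<longrightarrow>
       (\<exists>C :: ('m \<times> ('l, unit) tree set) set.
          (\<forall>(oi, P) \<in> C. oi \<in> Os \<and> P \<in> Tsem ar Os sem) \<and>
          (\<forall>(oi, P) \<in> C. r \<in> modal ar (T1 ar) sem oi P) \<and>
          (\<forall>r' \<in> TT ar (T1 ar). (\<forall>(oi, P) \<in> C. r' \<in> modal ar (T1 ar) sem oi P)
              \<longrightarrow> mu r' \<in> modal ar UNIV sem m {()})))"
proof -
  let ?sat = "\<lambda>r (oi, P). r \<in> modal ar (T1 ar) sem oi P"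
  let ?good = "\<lambda>m r. mu r \<in> modal ar UNIV sem m {()}"
  have tests: "C \<subseteq> Os \<times> Tsem ar Os sem \<longleftrightarrow> (\<forall>(oi, P) \<in> C. oi \<in> Os \<and> P \<in> Tsem ar Os sem)"
    for C :: "('m \<times> ('l, unit) tree set) set"
    by auto
  have "decomposable ar Os sem \<longleftrightarrow>
    (\<forall>m\<in>Os. \<forall>r\<in>TT ar (T1 ar). \<forall>r'\<in>TT ar (T1 ar).
       (\<forall>c\<in>Os \<times> Tsem ar Os sem. ?sat r c \<longrightarrow> ?sat r' c) \<longrightarrow> ?good m r \<longrightarrow> ?good m r')"
    by (simp add: decomposable_iff_top_preserved curly_le_iff_tests split_def)
  also have "\<dots> \<longleftrightarrow> (\<forall>m\<in>Os. \<forall>r\<in>TT ar (T1 ar). ?good m r \<longrightarrow>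
      (\<exists>C\<subseteq>Os \<times> Tsem ar Os sem. (\<forall>c\<in>C. ?sat r c) \<and>
         (\<forall>r'\<in>TT ar (T1 ar). (\<forall>c\<in>C. ?sat r' c) \<longrightarrow> ?good m r')))"
    by (simp only: preserved_iff_certified)
  finally show ?thesis
    unfolding tests by blast
qed

end
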